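(* Let $\frac1n<\alpha\le1$. Let $E(\tau)$ be a family of ellipsoids in $\mathbb{R}^{n+1}$ centered at the origin with fixed volume, let $r_{\min}(\tau)$ and $r_{\max}(\tau)$ be half of the minor axis and half of the major axis of $E(\tau)$, respectively, and let $\tilde I(\tau)$ be the integral quantity of $E(\tau)$. If $r_{\max}(\tau)\to\infty$, then $\tilde I(\tau)\to\infty$.
   Context: For a compact convex hypersurface whose enclosed region contains the origin in its interior, with support function $\tilde S(z)=\langle z,\tilde X(\nu^{-1}(z))\rangle>0$ ($z\in\mathbb{S}^n$, $\nu$ the outward unit normal), the integral quantity is $\tilde I=\big(\int_{\mathbb{S}^n}\tilde S^{1-\frac1\alpha}d\sigma_{\mathbb{S}^n}\big)^{-1}$ if $\alpha<1$ and $\tilde I=\int_{\mathbb{S}^n}\log\tilde S\,d\sigma_{\mathbb{S}^n}$ if $\alpha=1$. *)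

theory Defs
  imports "HOL-Analysis.Analysis"
begin

text \<open>Ellipsoids in R^(n+1) centred at the origin: images of the closed unit ball
  under an invertible linear map. The dimension n+1 is CARD('n).\<close>
definition origin_ellipsoid :: "(real^'n) set \<Rightarrow> bool" where
  "origin_ellipsoid E \<longleftrightarrow>
     (\<exists>A :: real^'n^'n. invertible A \<and> E = (\<lambda>x. A *v x) ` cball 0 1)"

definition support_fun :: "(real^'n) set \<Rightarrow> real^'n \<Rightarrow> real" where
  "support_fun E z = Sup ((\<lambda>x. z \<bullet> x) ` E)"

definition r_max :: "(real^'n) set \<Rightarrow> real" where
  "r_max E = Sup (norm ` E)"

definition r_min :: "(real^'n) set \<Rightarrow> real" where
  "r_min E = Inf (norm ` frontier E)"

text \<open>Integral over the unit sphere S^n in R^(n+1) with respect to the standard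
  surface measure, via polar coordinates:
  int_{S^n} g d\<sigma> = (n+1) * int_{B^(n+1)} g(x/|x|) dx.\<close>
definition sphere_integral :: "(real^'n \<Rightarrow> real) \<Rightarrow> real" where
  "sphere_integral g = real CARD('n) * integral (cball 0 1) (\<lambda>x. g (x /\<^sub>R norm x))"

definition integral_quantity :: "real \<Rightarrow> (real^'n) set \<Rightarrow> real" where
  "integral_quantity \<alpha> E =
     (if \<alpha> < 1 then inverse (sphere_integral (\<lambda>z. support_fun E z powr (1 - 1 / \<alpha>)))
      else sphere_integral (\<lambda>z. ln (support_fun E z)))"

end

theory Submission
  imports Defs
begin

text \<open>An origin-centred ellipsoid is \<open>E = A B\<close> for the unit ball \<open>B\<close>; its volume fixes \<open>|det A|\<close>
  and its support function is \<open>z \<mapsto> |A\<^sup>T z|\<close>. For \<open>\<alpha> < 1\<close> the integral quantity is the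
  reciprocal of \<open>\<integral> |A\<^sup>T z|\<^sup>-\<^sup>p\<close> with \<open>p = 1/\<alpha> - 1 < n + 1\<close>; for \<open>\<alpha> = 1\<close>, integrating
  \<open>ln y \<ge> ln l + 1 - l/y\<close> gives \<open>\<integral> ln |A\<^sup>T z| \<ge> \<sigma> ln (\<sigma> / \<integral> |A\<^sup>T z|\<^sup>-\<^sup>1)\<close>. So everything
  reduces to \<open>\<integral> |A\<^sup>T z|\<^sup>-\<^sup>p \<rightarrow> 0\<close> when the major semi-axis \<open>|A v|\<close> tends to infinity.

  Over the unit ball the integrand is at most \<open>f(x)\<^sup>-\<^sup>p\<close> with \<open>f(x) = |A\<^sup>T x|\<close>. Where \<open>f \<ge> R\<close> it
  is at most \<open>R\<^sup>-\<^sup>p\<close>; where \<open>\<rho> \<le> f < R\<close> the point lies in the slab \<open>|\<langle>x, A v\<rangle>| < R\<close>, of volume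
  \<open>O(R / |A v|)\<close>; and since the sublevel sets \<open>{f < r}\<close> have volume \<open>O(r\<^sup>n\<^sup>+\<^sup>1 / |det A|)\<close>,
  the dyadic shells below \<open>\<rho>\<close> contribute \<open>O(\<rho>\<^sup>n\<^sup>+\<^sup>1\<^sup>-\<^sup>p)\<close>. Taking \<open>R\<close> and \<open>\<rho>\<close> to be
  suitable powers of \<open>|A v|\<close> makes all three contributions vanish.\<close>

section \<open>Lebesgue measure of linear images\<close>

lemma measure_swap_image_cbox:
  fixes a b :: "real^'n"
  shows "measure lebesgue ((\<lambda>x. \<chi> i. x $ Transposition.transpose m n i) ` cbox a b)
       = measure lebesgue (cbox a b)"
proof (cases "cbox a b = {}")
  case False
  let ?h = "\<lambda>x::real^'n. \<chi> i. x $ Transposition.transpose m n i"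
  have eq: "?h ` cbox a b = cbox (?h a) (?h b)"
    by (auto simp: image_iff lambda_swap_Galois mem_box_cart) (metis transpose_involutory)+
  then have "cbox (?h a) (?h b) \<noteq> {}"
    using False by blast
  then show ?thesis
    using False prod.permute [OF permutes_swap_id, where S=UNIV and g="\<lambda>i. (b - a)$i", symmetric]
    by (simp add: eq content_cbox_cart)
qed simp

lemma measure_shear_image_cbox:
  fixes a b :: "real^'n"
  assumes "m \<noteq> n"
  shows "measure lebesgue ((\<lambda>x. \<chi> i. if i = m then x$m + x$n else x$i) ` cbox a b)
       = measure lebesgue (cbox a b)"
proof (cases "cbox a b = {}")
  case False
  let ?h = "\<lambda>x::real^'n. \<chi> i. if i = m then x$m + x$n else x$i"
  have lin: "linear ?h"
    by (rule linearI) (auto simp: vec_eq_iff algebra_simps)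
  have ne: "cbox 0 (b - a) \<noteq> {}"
    using False unfolding interval_ne_empty_cart by simp
  have box: "cbox a b = (+) a ` cbox 0 (b - a)"
    using cbox_translation[of a 0 "b - a"] by simp
  have "?h ` cbox a b = (+) (?h a) ` ?h ` cbox 0 (b - a)"
    unfolding box image_image by (simp add: linear_add[OF lin])
  then show ?thesis
    using measure_shear_interval[OF assms ne] by (simp add: measure_translation box)
qed simp

lemma abs_det_matrix_swap:
  "\<bar>det (matrix (\<lambda>x::real^'n. \<chi> i. x $ Transposition.transpose m n i))\<bar> = 1"
proof -
  have "(\<chi> i j. if Transposition.transpose m n i = j then 1 else 0)
      = (\<chi> i j. if j = Transposition.transpose m n i then 1 else (0::real))"
    by (auto intro!: Cart_lambda_cong)
  then have "matrix (\<lambda>x::real^'n. \<chi> i. x $ Transposition.transpose m n i)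
      = transpose (\<chi> i j. mat 1 $ i $ Transposition.transpose m n j)"
    by (auto simp: matrix_eq transpose_def axis_def mat_def matrix_def)
  then show ?thesis
    by (simp add: det_permute_columns permutes_swap_id sign_swap_id abs_mult)
qed

lemma det_matrix_shear:
  assumes "m \<noteq> n"
  shows "det (matrix (\<lambda>x::real^'n. \<chi> i. if i = m then x$m + x$n else x$i)) = 1"
proof -
  have "matrix (\<lambda>x::real^'n. \<chi> i. if i = m then x$m + x$n else x$i)
      = (\<chi> k. if k = m then row m (mat 1) + 1 *s row n (mat 1) else row k (mat 1))"
    by (auto simp: vec_eq_iff matrix_def row_def mat_def axis_def)
  then show ?thesis
    using det_row_operation[OF assms, of "mat 1" 1] by simp
qed

text \<open>\<open>Change_Of_Vars.measure_linear_image\<close> is stated only for index types of class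
  \<open>wellorder\<close>; the argument needs no order on the index type.\<close>

lemma
  fixes f :: "real^'n \<Rightarrow> real^'n"
  assumes "linear f" "S \<in> lmeasurable"
  shows measurable_linear_image_cart: "f ` S \<in> lmeasurable"
    and measure_linear_image_cart: "measure lebesgue (f ` S) = \<bar>det (matrix f)\<bar> * measure lebesgue S"
proof -
  let ?P = "\<lambda>f::real^'n \<Rightarrow> real^'n. \<forall>S \<in> lmeasurable.
      f ` S \<in> lmeasurable \<and> \<bar>det (matrix f)\<bar> * measure lebesgue S = measure lebesgue (f ` S)"
  have "?P f"
  proof (rule induct_linear_elementary[OF assms(1)])
    fix f g :: "real^'n \<Rightarrow> real^'n"
    assume "linear f" "linear g" and f: "?P f" and g: "?P g"
    show "?P (f \<circ> g)"
    proof
      fix S :: "(real^'n) set"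
      assume "S \<in> lmeasurable"
      then have "(f \<circ> g) ` S = f ` (g ` S)" "g ` S \<in> lmeasurable"
        "\<bar>det (matrix g)\<bar> * measure lebesgue S = measure lebesgue (g ` S)"
        using g by (auto simp: image_comp)
      then show "(f \<circ> g) ` S \<in> lmeasurable \<and> \<bar>det (matrix (f \<circ> g))\<bar> * measure lebesgue S
          = measure lebesgue ((f \<circ> g) ` S)"
        using f by (simp add: matrix_compose[OF \<open>linear g\<close> \<open>linear f\<close>] det_mul abs_mult
            mult.assoc)
    qed
  next
    fix f :: "real^'n \<Rightarrow> real^'n" and i
    assume f: "linear f" "\<And>x. f x $ i = 0"
    then have "\<not> surj f"
      by (metis one_neq_zero surjE vec_component)
    then have "\<not> inj f"
      using f(1) linear_injective_imp_surjective by blast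
    then have "det (matrix f) = 0" "negligible (f ` UNIV)"
      using det_nz_iff_inj[OF f(1)] negligible_linear_singular_image[OF f(1)] by auto
    then show "?P f"
      by (metis mult_zero_left abs_0 negligible_imp_measurable negligible_imp_measure0
          negligible_subset image_mono subset_UNIV)
  next
    fix c :: "'n \<Rightarrow> real"
    show "?P (\<lambda>x. \<chi> i. c i * x $ i)"
      by (simp add: measurable_stretch measure_stretch axis_def matrix_def det_diagonal)
  next
    fix m n :: 'n
    assume "m \<noteq> n"
    let ?h = "\<lambda>x::real^'n. \<chi> i. x $ Transposition.transpose m n i"
    have lin: "linear ?h"
      by (rule linearI) (simp_all add: plus_vec_def scaleR_vec_def)
    have "\<bar>det (matrix ?h)\<bar> = 1"
      by (rule abs_det_matrix_swap)
    moreover have "measure lebesgue (?h ` cbox a b) = 1 * measure lebesgue (cbox a b)" for a b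
      by (simp add: measure_swap_image_cbox)
    ultimately show "?P ?h"
      by (auto dest: measure_linear_sufficient[OF lin])
  next
    fix m n :: 'n
    assume "m \<noteq> n"
    let ?h = "\<lambda>x::real^'n. \<chi> i. if i = m then x$m + x$n else x$i"
    have lin: "linear ?h"
      by (rule linearI) (auto simp: vec_eq_iff algebra_simps)
    have "det (matrix ?h) = 1"
      by (rule det_matrix_shear[OF \<open>m \<noteq> n\<close>])
    moreover have "measure lebesgue (?h ` cbox a b) = 1 * measure lebesgue (cbox a b)" for a b
      by (simp add: measure_shear_image_cbox[OF \<open>m \<noteq> n\<close>])
    ultimately show "?P ?h"
      by (auto dest: measure_linear_sufficient[OF lin])
  qed
  then show "f ` S \<in> lmeasurable" "measure lebesgue (f ` S) = \<bar>det (matrix f)\<bar> * measure lebesgue S"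
    using assms(2) by auto
qed

section \<open>Ellipsoids\<close>

lemma Sup_inner_cball: "Sup ((\<lambda>x. w \<bullet> x) ` cball (0::'a::real_inner) 1) = norm w"
proof (rule cSup_eq_maximum)
  show "norm w \<in> (\<lambda>x. w \<bullet> x) ` cball 0 1"
  proof (cases "w = 0")
    case False
    then show ?thesis
      by (auto intro!: image_eqI[where x="w /\<^sub>R norm w"] simp: dot_square_norm power2_eq_square)
  qed (auto intro!: image_eqI[where x=0])
  show "y \<le> norm w" if "y \<in> (\<lambda>x. w \<bullet> x) ` cball 0 1" for y
  proof -
    from that obtain x where "norm x \<le> 1" "y = w \<bullet> x"
      by auto
    then show ?thesis
      using norm_cauchy_schwarz[of w x] mult_left_le[of "norm x" "norm w"] by auto
  qed
qed

lemma support_fun_matrix_image_cball: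
  "support_fun ((\<lambda>x. A *v x) ` cball 0 1) z = norm (transpose A *v z)"
proof -
  have "(\<lambda>x. z \<bullet> x) ` (\<lambda>x. A *v x) ` cball 0 1 = (\<lambda>x. (transpose A *v z) \<bullet> x) ` cball 0 1"
    by (auto simp: image_image dot_lmul_matrix)
  then show ?thesis
    by (simp add: support_fun_def Sup_inner_cball)
qed

lemma measure_matrix_image_cball:
  fixes A :: "real^'n^'n"
  shows "measure lebesgue ((\<lambda>x. A *v x) ` cball 0 1) = \<bar>det A\<bar> * measure lebesgue (cball (0::real^'n) 1)"
  using measure_linear_image_cart[of "\<lambda>x. A *v x" "cball 0 1"] by simp

lemma r_max_matrix_image_cball:
  fixes A :: "real^'n^'n"
  obtains v where "norm v \<le> 1" "r_max ((\<lambda>x. A *v x) ` cball 0 1) = norm (A *v v)"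
proof -
  have "continuous_on (cball 0 1) (\<lambda>x. norm (A *v x))"
    by (intro continuous_intros linear_continuous_on) (simp add: linear_linear)
  then obtain v where v: "v \<in> cball 0 1" "\<And>x. x \<in> cball 0 1 \<Longrightarrow> norm (A *v x) \<le> norm (A *v v)"
    using continuous_attains_sup[of "cball 0 1"] by (metis compact_cball cball_eq_empty not_one_less_zero)
  then have "r_max ((\<lambda>x. A *v x) ` cball 0 1) = norm (A *v v)"
    unfolding r_max_def image_image by (intro cSup_eq_maximum) auto
  with v(1) that show ?thesis
    by simp
qed

lemma measure_cball_pos: "0 < measure lebesgue (cball (0::'a::euclidean_space) 1)"
  using content_ball_pos[of 1 "0::'a"] measure_mono_fmeasurable[of "ball (0::'a) 1" "cball 0 1"]
  by fastforce

lemma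
  fixes B :: "real^'n^'n"
  assumes "invertible B" "0 \<le> r"
  shows lmeasurable_norm_matrix_less: "{x. norm (B *v x) < r} \<in> lmeasurable"
    and measure_norm_matrix_less:
      "measure lebesgue {x. norm (B *v x) < r} = r ^ CARD('n) * measure lebesgue (ball (0::real^'n) 1) / \<bar>det B\<bar>"
proof -
  obtain B' where B': "B ** B' = mat 1" "B' ** B = mat 1"
    using assms(1) unfolding invertible_def by auto
  have "\<bar>det B\<bar> * \<bar>det B'\<bar> = 1"
    using arg_cong[OF B'(1), of det] by (simp add: det_mul flip: abs_mult)
  then have "\<bar>det B'\<bar> = 1 / \<bar>det B\<bar>"
    by (auto simp: eq_divide_eq mult.commute)
  moreover have eq: "{x. norm (B *v x) < r} = (\<lambda>y. B' *v y) ` ball 0 r"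
    using B' by (force simp: matrix_vector_mul_assoc image_iff)
  ultimately show "measure lebesgue {x. norm (B *v x) < r} = r ^ CARD('n) * measure lebesgue (ball (0::real^'n) 1) / \<bar>det B\<bar>"
    using measure_linear_image_cart[of "\<lambda>y. B' *v y" "ball 0 r"]
      content_ball_conv_unit_ball[where c="0::real^'n", OF assms(2)]
    by simp
  show "{x. norm (B *v x) < r} \<in> lmeasurable"
    unfolding eq by (rule measurable_linear_image_cart) auto
qed

section \<open>Radial integrals over the unit ball\<close>

lemma invertible_norm_bounds_on_sphere:
  fixes B :: "real^'n^'n"
  assumes "invertible B"
  obtains lo hi where "0 < lo" "\<And>u. norm u = 1 \<Longrightarrow> lo \<le> norm (B *v u) \<and> norm (B *v u) \<le> hi"
proof -
  have cont: "continuous_on (sphere 0 1) (\<lambda>u. norm (B *v u))"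
    by (intro continuous_intros linear_continuous_on) (simp add: linear_linear)
  have ne: "sphere (0::real^'n) 1 \<noteq> {}"
    by simp
  obtain u0 where u0: "norm u0 = 1" "\<And>u. norm u = 1 \<Longrightarrow> norm (B *v u0) \<le> norm (B *v u)"
    using continuous_attains_inf[OF compact_sphere ne cont] by auto
  obtain u1 where "\<And>u. norm u = 1 \<Longrightarrow> norm (B *v u) \<le> norm (B *v u1)"
    using continuous_attains_sup[OF compact_sphere ne cont] by (metis mem_sphere_0)
  moreover have "B *v u0 \<noteq> 0"
    using assms u0(1) matrix_left_invertible_ker[of B] by (auto simp: invertible_def)
  ultimately show ?thesis
    using that[of "norm (B *v u0)" "norm (B *v u1)"] u0 by auto
qed

lemma borel_measurable_radial:
  fixes B :: "real^'n^'n"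
  assumes "k \<in> borel_measurable borel"
  shows "(\<lambda>x. k (norm (B *v (x /\<^sub>R norm x)))) \<in> borel_measurable lebesgue"
proof -
  have "(\<lambda>x. B *v x) \<in> borel_measurable borel"
    by (intro borel_measurable_continuous_onI linear_continuous_on) (simp add: linear_linear)
  then have "(\<lambda>x. k (norm (B *v (x /\<^sub>R norm x)))) \<in> borel_measurable borel"
    using assms by measurable
  then show ?thesis
    using measurable_compose[OF id_borel_measurable_lebesgue] by (simp add: o_def)
qed

lemma integrable_on_cball_radial:
  fixes B :: "real^'n^'n" and k :: "real \<Rightarrow> real"
  assumes "invertible B" "k \<in> borel_measurable borel" "continuous_on {0<..} k"
  shows "(\<lambda>x. k (norm (B *v (x /\<^sub>R norm x)))) integrable_on cball 0 1"
proof -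
  obtain lo hi where lo: "0 < lo" and bounds: "\<And>u. norm u = 1 \<Longrightarrow> lo \<le> norm (B *v u) \<and> norm (B *v u) \<le> hi"
    using invertible_norm_bounds_on_sphere[OF assms(1)] by blast
  have "compact (k ` {lo..hi})"
    using lo by (intro compact_continuous_image continuous_on_subset[OF assms(3)]) auto
  then have "bounded (k ` {lo..hi})"
    by (rule compact_imp_bounded)
  then obtain C where C: "\<And>y. y \<in> {lo..hi} \<Longrightarrow> \<bar>k y\<bar> \<le> C"
    unfolding bounded_iff by (metis imageI real_norm_def)
  have bound: "\<bar>k (norm (B *v (x /\<^sub>R norm x)))\<bar> \<le> max C \<bar>k 0\<bar>" for x
  proof (cases "x = 0")
    case False
    then have "norm (B *v (x /\<^sub>R norm x)) \<in> {lo..hi}"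
      using bounds[of "x /\<^sub>R norm x"] by simp
    then show ?thesis
      by (intro max.coboundedI1 C)
  qed simp
  show ?thesis
  proof (rule measurable_bounded_by_integrable_imp_integrable_real)
    show "(\<lambda>x. k (norm (B *v (x /\<^sub>R norm x)))) \<in> borel_measurable (lebesgue_on (cball 0 1))"
      by (rule measurable_restrict_space1) (rule borel_measurable_radial[OF assms(2)])
    show "(\<lambda>x. max C \<bar>k 0\<bar>) integrable_on cball (0::real^'n) 1"
      by (rule integrable_on_const) simp
  qed (use bound in auto)
qed

lemma integrable_on_cball_radial_powr:
  fixes B :: "real^'n^'n"
  assumes "invertible B"
  shows "(\<lambda>x. norm (B *v (x /\<^sub>R norm x)) powr p) integrable_on cball 0 1"
  by (rule integrable_on_cball_radial[OF assms]) (measurable, auto intro!: continuous_intros)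

lemma integrable_on_cball_radial_ln:
  fixes B :: "real^'n^'n"
  assumes "invertible B"
  shows "(\<lambda>x. ln (norm (B *v (x /\<^sub>R norm x)))) integrable_on cball 0 1"
  by (rule integrable_on_cball_radial[OF assms]) (measurable, auto intro!: continuous_intros)

lemma has_integral_mult_indicator:
  fixes S T :: "'a::euclidean_space set"
  assumes "S \<in> lmeasurable" "T \<in> sets lebesgue"
  shows "((\<lambda>x. c * indicator T x) has_integral c * measure lebesgue (T \<inter> S)) S"
proof -
  have "T \<inter> S \<in> lmeasurable"
    using assms by (simp add: fmeasurable_Int_fmeasurable Int_commute)
  then have "(indicator T has_integral measure lebesgue (T \<inter> S)) S"
    by (metis integrable_integral integrable_on_indicator integral_indicator)
  then show ?thesis
    by (rule has_integral_mult_right)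
qed

lemma has_integral_const_lmeasurable:
  "S \<in> lmeasurable \<Longrightarrow> ((\<lambda>x. c) has_integral c * measure lebesgue S) S"
  using has_integral_mult_indicator[of S UNIV c] by simp

text \<open>The radial projection \<open>x /\<^sub>R norm x\<close> is \<open>0\<close> at the origin, where pointwise comparisons
  between radial integrands usually fail.\<close>

lemma has_integral_le_off_origin:
  fixes f g :: "'a::euclidean_space \<Rightarrow> real"
  assumes "(f has_integral i) S" "(g has_integral j) S" "\<And>x. x \<in> S \<Longrightarrow> x \<noteq> 0 \<Longrightarrow> f x \<le> g x"
  shows "i \<le> j"
proof -
  have "((\<lambda>x. if x = 0 then g x else f x) has_integral i) S"
    by (rule has_integral_spike_finite[where S="{0}", OF _ _ assms(1)]) auto
  then show ?thesis
    by (rule has_integral_le[OF _ assms(2)]) (use assms(3) in auto)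
qed

lemma sphere_integral_norm_powr_pos:
  fixes B :: "real^'n^'n"
  assumes "invertible B"
  shows "0 < sphere_integral (\<lambda>z. norm (B *v z) powr p)"
proof -
  obtain lo hi where lo: "0 < lo" and bounds: "\<And>u. norm u = 1 \<Longrightarrow> lo \<le> norm (B *v u) \<and> norm (B *v u) \<le> hi"
    using invertible_norm_bounds_on_sphere[OF assms] by blast
  define c where "c = min (lo powr p) (hi powr p)"
  have "lo \<le> hi"
    using bounds[of "axis undefined 1"] by auto
  then have "0 < c"
    using lo by (simp add: c_def)
  have c_le: "c \<le> y powr p" if "lo \<le> y" "y \<le> hi" for y
  proof (cases "0 \<le> p")
    case True
    then have "lo powr p \<le> y powr p"
      using lo that by (intro powr_mono2) auto
    then show ?thesis
      by (simp add: c_def min.coboundedI1)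
  next
    case False
    then have "hi powr p \<le> y powr p"
      using lo that by (intro powr_mono2') auto
    then show ?thesis
      by (simp add: c_def min.coboundedI2)
  qed
  have c_le_integrand: "c \<le> norm (B *v (x /\<^sub>R norm x)) powr p" if "x \<noteq> 0" for x
    using bounds[of "x /\<^sub>R norm x"] that by (intro c_le) auto
  have le: "c * measure lebesgue (cball (0::real^'n) 1)
      \<le> integral (cball 0 1) (\<lambda>x. norm (B *v (x /\<^sub>R norm x)) powr p)"
    by (rule has_integral_le_off_origin[OF has_integral_const_lmeasurable
          integrable_integral[OF integrable_on_cball_radial_powr[OF assms]]])
      (simp_all add: c_le_integrand)
  have "0 < c * measure lebesgue (cball (0::real^'n) 1)"
    using \<open>0 < c\<close> measure_cball_pos by simp
  then have "0 < integral (cball 0 1) (\<lambda>x. norm (B *v (x /\<^sub>R norm x)) powr p)"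
    using le by (rule less_le_trans)
  with zero_less_card_finite show ?thesis
    unfolding sphere_integral_def by (intro mult_pos_pos) simp_all
qed

lemma ln_ge_one_minus_powr:
  fixes l y :: real
  assumes "0 < l" "0 < y"
  shows "ln l + 1 - l * y powr -1 \<le> ln y"
  using ln_le_minus_one[of "l * y powr -1"] assms by (simp add: ln_div powr_minus_divide)

lemma sphere_integral_ln_norm_ge:
  fixes B :: "real^'n^'n"
  assumes "invertible B" "0 < l"
  shows "(ln l + 1) * sphere_integral (\<lambda>z::real^'n. 1) - l * sphere_integral (\<lambda>z. norm (B *v z) powr -1)
      \<le> sphere_integral (\<lambda>z. ln (norm (B *v z)))"
proof -
  obtain lo hi where lo: "0 < lo" and bounds: "\<And>u. norm u = 1 \<Longrightarrow> lo \<le> norm (B *v u) \<and> norm (B *v u) \<le> hi"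
    using invertible_norm_bounds_on_sphere[OF assms(1)] by blast
  have pos: "0 < norm (B *v (x /\<^sub>R norm x))" if "x \<noteq> 0" for x
    using lo bounds[of "x /\<^sub>R norm x"] that by auto
  let ?g = "\<lambda>x::real^'n. norm (B *v (x /\<^sub>R norm x)) powr -1"
  have "((\<lambda>x. (ln l + 1) - l * ?g x) has_integral
      (ln l + 1) * measure lebesgue (cball (0::real^'n) 1) - l * integral (cball 0 1) ?g) (cball 0 1)"
    by (intro has_integral_diff has_integral_const_lmeasurable has_integral_mult_right
        integrable_integral integrable_on_cball_radial_powr[OF assms(1)]) auto
  then have "(ln l + 1) * measure lebesgue (cball (0::real^'n) 1) - l * integral (cball 0 1) ?g
      \<le> integral (cball 0 1) (\<lambda>x. ln (norm (B *v (x /\<^sub>R norm x))))"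
    (is "?lhs \<le> ?rhs")
    using pos ln_ge_one_minus_powr[OF assms(2)]
    by (elim has_integral_le_off_origin[OF _ integrable_integral[OF integrable_on_cball_radial_ln[OF assms(1)]]])
      auto
  then have "real CARD('n) * ?lhs \<le> real CARD('n) * ?rhs"
    by (rule mult_left_mono) simp
  moreover have "integral (cball 0 1) (\<lambda>x::real^'n. 1) = measure lebesgue (cball (0::real^'n) 1)"
    by (rule lmeasure_integral[OF lmeasurable_cball, symmetric])
  moreover have "a * (N * w) - l * (N * i) = N * (a * w - l * i)" for a N w i :: real
    by (simp add: algebra_simps)
  ultimately show ?thesis
    unfolding sphere_integral_def by (simp only:)
qed

section \<open>Decay of the negative moments\<close>

lemma measure_slab_cball_le:
  fixes w :: "real^'n"
  assumes "w \<noteq> 0" "0 < R"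
  shows "measure lebesgue ({x. \<bar>x \<bullet> w\<bar> < R} \<inter> cball 0 1) \<le> 2 ^ CARD('n) * R / norm w"
proof -
  define i :: 'n where "i = undefined"
  define h where "h = R / norm w"
  have "0 < h"
    using assms by (simp add: h_def)
  obtain T :: "real^'n \<Rightarrow> real^'n" where T: "orthogonal_transformation T" "T (axis i 1) = w /\<^sub>R norm w"
    using orthogonal_transformation_exists_1[of "axis i (1::real)" "w /\<^sub>R norm w"] assms(1) by auto
  define b :: "real^'n" where "b = (\<chi> j. if j = i then h else 1)"
  have sub: "{x. \<bar>x \<bullet> w\<bar> < R} \<inter> cball 0 1 \<subseteq> T ` cbox (- b) b"
  proof
    fix x
    assume x: "x \<in> {x. \<bar>x \<bullet> w\<bar> < R} \<inter> cball 0 1"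
    obtain y where y: "x = T y"
      using orthogonal_transformation_surj[OF T(1)] by (metis surjD)
    have "norm y \<le> 1"
      using x y orthogonal_transformation_norm[OF T(1)] by auto
    then have "\<bar>y $ j\<bar> \<le> 1" for j
      using component_le_norm_cart[of y j] by simp
    moreover have "y $ i = x \<bullet> w / norm w"
      using T y unfolding orthogonal_transformation_def
      by (metis inner_axis inner_scaleR_right divide_inverse_commute real_inner_1_right)
    then have "\<bar>y $ i\<bar> < h"
      using x assms by (simp add: h_def abs_div divide_strict_right_mono)
    ultimately have "y \<in> cbox (- b) b"
      unfolding mem_box_cart b_def by (auto simp: abs_le_iff abs_less_iff)
    then show "x \<in> T ` cbox (- b) b"
      using y by auto
  qed
  have "\<bar>det (matrix T)\<bar> = 1"
    using det_orthogonal_matrix T(1) orthogonal_transformation_matrix by fastforce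
  then have "measure lebesgue (T ` cbox (- b) b) = measure lebesgue (cbox (- b) b)"
    using measure_linear_image_cart[of T "cbox (- b) b"] T(1) orthogonal_transformation_linear by auto
  also have "\<dots> = (\<Prod>j\<in>UNIV. b $ j - (- b) $ j)"
    using \<open>0 < h\<close> content_cbox_cart[of "- b" b] by (simp add: interval_ne_empty_cart b_def)
  also have "\<dots> = (\<Prod>j\<in>UNIV. 2 * (if j = i then h else 1))"
    by (auto simp: b_def intro!: prod.cong)
  also have "\<dots> = 2 ^ CARD('n) * h"
    by (simp add: prod.distrib prod.delta)
  finally have "measure lebesgue (T ` cbox (- b) b) = 2 ^ CARD('n) * h" .
  moreover have "measure lebesgue ({x. \<bar>x \<bullet> w\<bar> < R} \<inter> cball 0 1) \<le> measure lebesgue (T ` cbox (- b) b)"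
  proof (rule measure_mono_fmeasurable[OF sub])
    have "open {x::real^'n. \<bar>x \<bullet> w\<bar> < R}"
      by (intro open_Collect_less continuous_intros)
    then show "{x. \<bar>x \<bullet> w\<bar> < R} \<inter> cball 0 1 \<in> sets lebesgue"
      by auto
    show "T ` cbox (- b) b \<in> lmeasurable"
      using measurable_linear_image_cart T(1) orthogonal_transformation_linear by blast
  qed
  ultimately show ?thesis
    by (simp add: h_def)
qed

lemma dyadic_shell_index:
  fixes y \<rho> :: real
  assumes "\<rho> / 2 ^ (K+1) \<le> y" "y < \<rho>"
  obtains k where "k \<le> K" "\<rho> / 2 ^ (k+1) \<le> y" "y < \<rho> / 2 ^ k"
proof -
  define k where "k = (LEAST k. \<rho> / 2 ^ (k+1) \<le> y)"
  have "\<rho> / 2 ^ (k+1) \<le> y"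
    unfolding k_def by (rule LeastI[of _ K]) (rule assms(1))
  moreover have "k \<le> K"
    unfolding k_def by (rule Least_le) (rule assms(1))
  moreover have "y < \<rho> / 2 ^ k"
  proof (cases k)
    case (Suc j)
    then have "\<not> \<rho> / 2 ^ (j+1) \<le> y"
      unfolding k_def by (metis lessI not_less_Least)
    then show ?thesis
      using Suc by simp
  qed (use assms in simp)
  ultimately show ?thesis
    using that by blast
qed

lemma powr_neg_le_dyadic_layers:
  fixes g y H R \<rho> p :: real
  assumes "0 < p" "0 < R" "0 < \<rho>" "g \<le> H" "0 \<le> H" "0 < y \<Longrightarrow> g \<le> y powr -p"
  shows "g \<le> R powr -p + \<rho> powr -p * indicator {..<R} y
      + (\<Sum>k\<le>K. (\<rho> / 2 ^ (k+1)) powr -p * indicator {..<\<rho> / 2 ^ k} y)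
      + H * indicator {..<\<rho> / 2 ^ (K+1)} y"
proof -
  let ?a = "\<lambda>k. (\<rho> / 2 ^ (k+1)) powr -p * indicator {..<\<rho> / 2 ^ k} y"
  have terms_nonneg: "0 \<le> \<rho> powr -p * indicator {..<R} y" "0 \<le> sum ?a {..K}"
    "0 \<le> H * indicator {..<\<rho> / 2 ^ (K+1)} y" "0 \<le> R powr -p"
    using assms(5) by (auto intro: sum_nonneg)
  consider "R \<le> y" | "\<rho> \<le> y" "y < R" | "y < \<rho> / 2 ^ (K+1)" | "\<rho> / 2 ^ (K+1) \<le> y" "y < \<rho>"
    by linarith
  then show ?thesis
  proof cases
    case 1
    then have "g \<le> y powr -p"
      using assms(2,6) by simp
    also have "\<dots> \<le> R powr -p"
      using 1 assms(1,2) by (intro powr_mono2') auto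
    finally show ?thesis
      using terms_nonneg by linarith
  next
    case 2
    then have "g \<le> y powr -p"
      using assms(3,6) by simp
    also have "\<dots> \<le> \<rho> powr -p * indicator {..<R} y"
      using 2 assms(1,3) by (auto intro: powr_mono2')
    finally show ?thesis
      using terms_nonneg by linarith
  next
    case 3
    then have "g \<le> H * indicator {..<\<rho> / 2 ^ (K+1)} y"
      using assms by simp
    then show ?thesis
      using terms_nonneg by linarith
  next
    case 4
    then obtain k where k: "k \<le> K" "\<rho> / 2 ^ (k+1) \<le> y" "y < \<rho> / 2 ^ k"
      by (rule dyadic_shell_index)
    moreover have "0 < \<rho> / 2 ^ (k+1)"
      using assms(3) by simp
    ultimately have "0 < y"
      by linarith
    then have "g \<le> y powr -p"
      by (rule assms(6))
    also have "\<dots> \<le> ?a k"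
      using k \<open>0 < y\<close> assms(1) by (auto intro: powr_mono2')
    also have "\<dots> \<le> sum ?a {..K}"
      using k(1) by (intro member_le_sum) auto
    finally show ?thesis
      using terms_nonneg by linarith
  qed
qed

lemma dyadic_sum_le:
  fixes \<rho> p :: real and N :: nat
  assumes "0 < p" "p < N" "0 < \<rho>"
  shows "(\<Sum>k\<le>K. (\<rho> / 2 ^ (k+1)) powr -p * (\<rho> / 2 ^ k) ^ N)
      \<le> 2 powr p * \<rho> powr (N - p) / (1 - 2 powr (p - N))"
proof -
  define \<theta> :: real where "\<theta> = 2 powr (p - N)"
  have "\<theta> < 2 powr 0"
    unfolding \<theta>_def using assms by (intro powr_less_mono) auto
  then have \<theta>: "0 < \<theta>" "\<theta> < 1"
    by (auto simp: \<theta>_def)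
  have dyadic_term: "(\<rho> / 2 ^ (k+1)) powr -p * (\<rho> / 2 ^ k) ^ N = 2 powr p * \<rho> powr (N - p) * \<theta> ^ k"
    for k
  proof -
    define r where "r = \<rho> / 2 ^ k"
    have "0 < r"
      using assms(3) by (simp add: r_def)
    have "(\<rho> / 2 ^ (k+1)) powr -p * (\<rho> / 2 ^ k) ^ N = (r / 2) powr -p * r powr N"
      using \<open>0 < r\<close> by (simp add: r_def powr_realpow mult.commute)
    also have "\<dots> = 2 powr p * r powr (N - p)"
      using \<open>0 < r\<close> by (simp add: powr_divide powr_minus_divide powr_diff field_simps)
    finally have halved: "(\<rho> / 2 ^ (k+1)) powr -p * (\<rho> / 2 ^ k) ^ N = 2 powr p * r powr (N - p)" .
    have "\<theta> ^ k * (2 powr real k) powr (N - p) = 1"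
    proof -
      have "\<theta> ^ k = 2 powr ((p - N) * real k)"
        using powr_realpow[of \<theta> k] \<theta>(1) by (simp add: \<theta>_def powr_powr)
      moreover have "(2 powr real k) powr (N - p) = 2 powr (real k * (N - p))"
        by (simp add: powr_powr)
      moreover have "(p - N) * real k + real k * (N - p) = 0"
        by (simp add: algebra_simps)
      ultimately show ?thesis
        by (simp only: powr_add[symmetric] powr_zero_eq_one) simp
    qed
    moreover have "r powr (N - p) = \<rho> powr (N - p) / (2 powr real k) powr (N - p)"
      using assms(3) by (simp add: r_def powr_divide powr_realpow)
    ultimately have "r powr (N - p) = \<rho> powr (N - p) * \<theta> ^ k"
      by (metis nonzero_mult_div_cancel_left mult.commute divide_inverse inverse_unique)
    with halved show ?thesis
      by (simp only: mult.assoc)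
  qed
  have "(\<Sum>k\<le>K. \<theta> ^ k) = (1 - \<theta> ^ Suc K) / (1 - \<theta>)"
    using \<theta> by (simp add: lessThan_Suc_atMost[symmetric] geometric_sum field_simps)
  also have "\<dots> \<le> 1 / (1 - \<theta>)"
    using \<theta> by (intro divide_right_mono) auto
  finally have geometric: "(\<Sum>k\<le>K. \<theta> ^ k) \<le> 1 / (1 - \<theta>)" .
  have "(\<Sum>k\<le>K. (\<rho> / 2 ^ (k+1)) powr -p * (\<rho> / 2 ^ k) ^ N)
      = 2 powr p * \<rho> powr (N - p) * (\<Sum>k\<le>K. \<theta> ^ k)"
    by (simp only: dyadic_term sum_distrib_left)
  also have "\<dots> \<le> 2 powr p * \<rho> powr (N - p) * (1 / (1 - \<theta>))"
    by (rule mult_left_mono[OF geometric]) simp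
  finally show ?thesis
    by (simp add: \<theta>_def)
qed

text \<open>Since \<open>|x \<bullet> B\<^sup>T v| = |B x \<bullet> v| \<le> |B x|\<close>, the points with \<open>|B x| < R\<close> lie in a slab
  orthogonal to \<open>B\<^sup>T v\<close>.\<close>

lemma radial_powr_le_layers:
  fixes B :: "real^'n^'n" and v x :: "real^'n"
  assumes "0 < p" "norm v \<le> 1" "0 < R" "0 < \<rho>" "0 \<le> H"
    and H: "norm (B *v (x /\<^sub>R norm x)) powr -p \<le> H" and x: "x \<in> cball 0 1"
  shows "norm (B *v (x /\<^sub>R norm x)) powr -p
    \<le> R powr -p + \<rho> powr -p * indicator {x. \<bar>x \<bullet> (transpose B *v v)\<bar> < R} x
      + (\<Sum>k\<le>K. (\<rho> / 2 ^ (k+1)) powr -p * indicator {x. norm (B *v x) < \<rho> / 2 ^ k} x)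
      + H * indicator {x. norm (B *v x) < \<rho> / 2 ^ (K+1)} x"
proof -
  define f where "f x = norm (B *v x)" for x
  have "\<bar>x \<bullet> (transpose B *v v)\<bar> = \<bar>(B *v x) \<bullet> v\<bar>"
    by (metis dot_lmul_matrix vector_transpose_matrix)
  also have "\<dots> \<le> f x * norm v"
    unfolding f_def by (rule Cauchy_Schwarz_ineq2)
  also have "\<dots> \<le> f x"
    using assms(2) by (simp add: f_def mult_left_le)
  finally have slab: "indicator {x. norm (B *v x) < R} x
      \<le> (indicator {x. \<bar>x \<bullet> (transpose B *v v)\<bar> < R} x :: real)"
    by (auto simp: indicator_def f_def)
  have sublevel: "indicator {..<r} (f x) = (indicator {x. norm (B *v x) < r} x :: real)" for r
    by (simp add: indicator_def f_def)
  have "norm (B *v (x /\<^sub>R norm x)) powr -p \<le> f x powr -p" if "0 < f x"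
  proof -
    have "x \<noteq> 0"
      using that by (auto simp: f_def)
    then have "f x \<le> f x / norm x"
      using x that by (simp add: le_divide_eq mult_left_le)
    also have "\<dots> = norm (B *v (x /\<^sub>R norm x))"
      by (simp add: f_def matrix_vector_mult_scaleR divide_inverse_commute)
    finally show ?thesis
      using that assms(1) by (intro powr_mono2') auto
  qed
  then have "norm (B *v (x /\<^sub>R norm x)) powr -p \<le> R powr -p + \<rho> powr -p * indicator {..<R} (f x)
    + (\<Sum>k\<le>K. (\<rho> / 2 ^ (k+1)) powr -p * indicator {..<\<rho> / 2 ^ k} (f x))
    + H * indicator {..<\<rho> / 2 ^ (K+1)} (f x)"
    using assms by (intro powr_neg_le_dyadic_layers H) auto
  also have "\<dots> \<le> R powr -p + \<rho> powr -p * indicator {x. \<bar>x \<bullet> (transpose B *v v)\<bar> < R} x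
      + (\<Sum>k\<le>K. (\<rho> / 2 ^ (k+1)) powr -p * indicator {x. norm (B *v x) < \<rho> / 2 ^ k} x)
      + H * indicator {x. norm (B *v x) < \<rho> / 2 ^ (K+1)} x"
    unfolding sublevel using mult_left_mono[OF slab, of "\<rho> powr -p"] by simp
  finally show ?thesis .
qed

lemma integral_radial_powr_le_layers:
  fixes B :: "real^'n^'n" and v :: "real^'n"
  assumes B: "invertible B" and "0 < p" "norm v \<le> 1" "0 < R" "0 < \<rho>" "0 \<le> H"
    and H: "\<And>x. norm (B *v (x /\<^sub>R norm x)) powr -p \<le> H"
  shows "integral (cball 0 1) (\<lambda>x. norm (B *v (x /\<^sub>R norm x)) powr -p)
    \<le> R powr -p * measure lebesgue (cball (0::real^'n) 1)
      + \<rho> powr -p * measure lebesgue ({x. \<bar>x \<bullet> (transpose B *v v)\<bar> < R} \<inter> cball 0 1)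
      + (\<Sum>k\<le>K. (\<rho> / 2 ^ (k+1)) powr -p * measure lebesgue ({x. norm (B *v x) < \<rho> / 2 ^ k} \<inter> cball 0 1))
      + H * measure lebesgue ({x. norm (B *v x) < \<rho> / 2 ^ (K+1)} \<inter> cball 0 1)"
proof (rule has_integral_le[OF integrable_integral[OF integrable_on_cball_radial_powr[OF B]]])
  have "open {x::real^'n. \<bar>x \<bullet> (transpose B *v v)\<bar> < R}" "open {x. norm (B *v x) < r}" for r
    by (auto intro!: open_Collect_less continuous_intros linear_continuous_at)
  then have sets: "{x::real^'n. \<bar>x \<bullet> (transpose B *v v)\<bar> < R} \<in> sets lebesgue"
    "{x. norm (B *v x) < r} \<in> sets lebesgue" for r
    by auto
  show "((\<lambda>x. R powr -p + \<rho> powr -p * indicator {x. \<bar>x \<bullet> (transpose B *v v)\<bar> < R} x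
      + (\<Sum>k\<le>K. (\<rho> / 2 ^ (k+1)) powr -p * indicator {x. norm (B *v x) < \<rho> / 2 ^ k} x)
      + H * indicator {x. norm (B *v x) < \<rho> / 2 ^ (K+1)} x) has_integral
      R powr -p * measure lebesgue (cball (0::real^'n) 1)
      + \<rho> powr -p * measure lebesgue ({x. \<bar>x \<bullet> (transpose B *v v)\<bar> < R} \<inter> cball 0 1)
      + (\<Sum>k\<le>K. (\<rho> / 2 ^ (k+1)) powr -p * measure lebesgue ({x. norm (B *v x) < \<rho> / 2 ^ k} \<inter> cball 0 1))
      + H * measure lebesgue ({x. norm (B *v x) < \<rho> / 2 ^ (K+1)} \<inter> cball 0 1)) (cball 0 1)"
    by (intro has_integral_add has_integral_sum has_integral_const_lmeasurable has_integral_mult_indicator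
        lmeasurable_cball sets finite_atMost)
qed (use radial_powr_le_layers[OF assms(2-6) H] in simp)

lemma measure_norm_matrix_less_cball_le:
  fixes B :: "real^'n^'n"
  assumes B: "invertible B" and "0 \<le> r"
  shows "measure lebesgue ({x. norm (B *v x) < r} \<inter> cball 0 1)
    \<le> measure lebesgue (cball (0::real^'n) 1) / \<bar>det B\<bar> * r ^ CARD('n)"
proof -
  have "measure lebesgue ({x. norm (B *v x) < r} \<inter> cball 0 1) \<le> measure lebesgue {x. norm (B *v x) < r}"
    by (intro measure_mono_fmeasurable lmeasurable_norm_matrix_less[OF assms] sets.Int fmeasurableD
        lmeasurable_cball) auto
  also have "\<dots> = r ^ CARD('n) * measure lebesgue (ball (0::real^'n) 1) / \<bar>det B\<bar>"
    by (rule measure_norm_matrix_less[OF assms])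
  also have "\<dots> \<le> r ^ CARD('n) * measure lebesgue (cball (0::real^'n) 1) / \<bar>det B\<bar>"
    using assms(2) by (intro divide_right_mono mult_left_mono measure_mono_fmeasurable) auto
  finally show ?thesis
    by (simp add: field_simps)
qed

lemma integral_radial_powr_le:
  fixes B :: "real^'n^'n" and v :: "real^'n" and p R \<rho> :: real
  assumes B: "invertible B" and p: "0 < p" "p < CARD('n)"
    and v: "norm v \<le> 1" "transpose B *v v \<noteq> 0" and "0 < R" "0 < \<rho>"
  shows "integral (cball 0 1) (\<lambda>x. norm (B *v (x /\<^sub>R norm x)) powr -p)
    \<le> R powr -p * measure lebesgue (cball (0::real^'n) 1)
      + \<rho> powr -p * (2 ^ CARD('n) * R / norm (transpose B *v v))
      + measure lebesgue (cball (0::real^'n) 1) / \<bar>det B\<bar>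
        * (2 powr p * \<rho> powr (CARD('n) - p) / (1 - 2 powr (p - CARD('n))))"
    (is "?I \<le> ?X + ?c * ?S")
proof -
  obtain lo hi where lo: "0 < lo" and bounds: "\<And>u. norm u = 1 \<Longrightarrow> lo \<le> norm (B *v u) \<and> norm (B *v u) \<le> hi"
    using invertible_norm_bounds_on_sphere[OF B] by blast
  define H where "H = lo powr -p"
  have H: "norm (B *v (x /\<^sub>R norm x)) powr -p \<le> H" for x
  proof (cases "x = 0")
    case False
    then show ?thesis
      unfolding H_def using lo bounds[of "x /\<^sub>R norm x"] p(1) by (intro powr_mono2') auto
  qed (simp add: H_def)
  have "0 < ?c"
    using B measure_cball_pos by (simp add: invertible_det_nz)
  have bound: "?I \<le> ?X + ?c * ?S + H * (?c * (\<rho> / 2 ^ (K+1)) ^ CARD('n))" for K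
  proof -
    have "(\<Sum>k\<le>K. (\<rho> / 2 ^ (k+1)) powr -p * measure lebesgue ({x. norm (B *v x) < \<rho> / 2 ^ k} \<inter> cball 0 1))
        \<le> (\<Sum>k\<le>K. (\<rho> / 2 ^ (k+1)) powr -p * (?c * (\<rho> / 2 ^ k) ^ CARD('n)))"
      using \<open>0 < \<rho>\<close> by (intro sum_mono mult_left_mono measure_norm_matrix_less_cball_le B) auto
    also have "\<dots> = ?c * (\<Sum>k\<le>K. (\<rho> / 2 ^ (k+1)) powr -p * (\<rho> / 2 ^ k) ^ CARD('n))"
      by (simp add: sum_distrib_left mult.left_commute)
    also have "\<dots> \<le> ?c * ?S"
      using \<open>0 < ?c\<close> by (intro mult_left_mono dyadic_sum_le p \<open>0 < \<rho>\<close>) auto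
    finally have dyadic: "(\<Sum>k\<le>K. (\<rho> / 2 ^ (k+1)) powr -p
        * measure lebesgue ({x. norm (B *v x) < \<rho> / 2 ^ k} \<inter> cball 0 1)) \<le> ?c * ?S" .
    have "\<rho> powr -p * measure lebesgue ({x. \<bar>x \<bullet> (transpose B *v v)\<bar> < R} \<inter> cball 0 1)
        \<le> \<rho> powr -p * (2 ^ CARD('n) * R / norm (transpose B *v v))"
      by (intro mult_left_mono measure_slab_cball_le v \<open>0 < R\<close>) simp
    moreover have "H * measure lebesgue ({x. norm (B *v x) < \<rho> / 2 ^ (K+1)} \<inter> cball 0 1)
        \<le> H * (?c * (\<rho> / 2 ^ (K+1)) ^ CARD('n))"
      using \<open>0 < \<rho>\<close> by (intro mult_left_mono measure_norm_matrix_less_cball_le B) (auto simp: H_def)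
    ultimately show ?thesis
      using integral_radial_powr_le_layers[OF B p(1) v(1) \<open>0 < R\<close> \<open>0 < \<rho>\<close> _ H, of K] dyadic
      by (simp add: H_def)
  qed
  have "(\<lambda>K. (\<rho> / 2) / 2 ^ K) \<longlonglongrightarrow> 0"
    by (rule LIMSEQ_divide_realpow_zero) simp
  then have "(\<lambda>K. (\<rho> / 2 ^ (K+1)) ^ CARD('n)) \<longlonglongrightarrow> 0"
    using tendsto_power[of _ 0 sequentially "CARD('n)"] by (simp add: mult.commute)
  then have "(\<lambda>K. H * (?c * (\<rho> / 2 ^ (K+1)) ^ CARD('n))) \<longlonglongrightarrow> 0"
    by (intro tendsto_mult_right_zero)
  then have "(\<lambda>K. ?X + ?c * ?S + H * (?c * (\<rho> / 2 ^ (K+1)) ^ CARD('n))) \<longlonglongrightarrow> ?X + ?c * ?S"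
    using tendsto_add[OF tendsto_const] by fastforce
  then show ?thesis
    using bound by (intro LIMSEQ_le_const) auto
qed

lemma sphere_integral_norm_powr_le_r_max:
  fixes A :: "real^'n^'n" and p m :: real
  assumes A: "invertible A" and p: "0 < p" "p < CARD('n)"
    and m: "r_max ((\<lambda>x. A *v x) ` cball 0 1) = m" "0 < m"
  shows "sphere_integral (\<lambda>z. norm (transpose A *v z) powr -p)
    \<le> real CARD('n) * (measure lebesgue (cball (0::real^'n) 1) * m powr (-p/2) + 2 ^ CARD('n) * m powr (-1/4)
      + measure lebesgue (cball (0::real^'n) 1) / \<bar>det A\<bar> * (2 powr p / (1 - 2 powr (p - CARD('n))))
        * m powr ((p - CARD('n)) / (4*p)))"
proof -
  let ?\<omega> = "measure lebesgue (cball (0::real^'n) 1)"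
  obtain v where v: "norm v \<le> 1" "m = norm (A *v v)"
    using r_max_matrix_image_cball m(1) by metis
  \<comment> \<open>With these choices each of the three terms is a negative power of \<open>m\<close>.\<close>
  define R where "R = m powr (1/2)"
  define \<rho> where "\<rho> = m powr (-1/(4*p))"
  have "R powr -p = m powr (-p/2)"
    using m(2) by (simp add: R_def powr_powr)
  moreover have "\<rho> powr -p * (2 ^ CARD('n) * R / m) = 2 ^ CARD('n) * m powr (-1/4)"
  proof -
    have "m powr (1/4) * m powr (1/2) = m powr (3/4)"
      by (simp flip: powr_add)
    also have "\<dots> = m powr (-1/4) * m powr 1"
      by (subst powr_add[symmetric]) simp
    also have "\<dots> = m powr (-1/4) * m"
      using m(2) by simp
    finally have "m powr (1/4) * m powr (1/2) = m powr (-1/4) * m" .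
    then show ?thesis
      using m(2) p(1) by (simp add: \<rho>_def R_def powr_powr field_simps)
  qed
  moreover have "\<rho> powr (CARD('n) - p) = m powr ((p - CARD('n)) / (4*p))"
  proof -
    have "-1 / (4*p) * (CARD('n) - p) = (p - CARD('n)) / (4*p)"
      using p(1) by (simp add: field_simps)
    then show ?thesis
      by (simp only: \<rho>_def powr_powr)
  qed
  moreover have "integral (cball 0 1) (\<lambda>x. norm (transpose A *v (x /\<^sub>R norm x)) powr -p)
    \<le> R powr -p * ?\<omega> + \<rho> powr -p * (2 ^ CARD('n) * R / m)
      + ?\<omega> / \<bar>det A\<bar> * (2 powr p * \<rho> powr (CARD('n) - p) / (1 - 2 powr (p - CARD('n))))"
    using integral_radial_powr_le[OF transpose_invertible[OF A] p v(1), where R=R and \<rho>=\<rho>] v(2) m(2)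
    by (simp add: R_def \<rho>_def)
  ultimately have "integral (cball 0 1) (\<lambda>x. norm (transpose A *v (x /\<^sub>R norm x)) powr -p)
    \<le> ?\<omega> * m powr (-p/2) + 2 ^ CARD('n) * m powr (-1/4)
      + ?\<omega> / \<bar>det A\<bar> * (2 powr p / (1 - 2 powr (p - CARD('n)))) * m powr ((p - CARD('n)) / (4*p))"
    by (simp add: field_simps)
  then show ?thesis
    unfolding sphere_integral_def by (rule mult_left_mono) simp
qed

lemma filterlim_sphere_integral_norm_powr_at_right_0:
  fixes A :: "'i \<Rightarrow> real^'n^'n" and p D :: real
  assumes inv: "\<And>t. invertible (A t)" and det: "\<And>t. \<bar>det (A t)\<bar> = D"
    and p: "0 < p" "p < CARD('n)"
    and lim: "filterlim (\<lambda>t. r_max ((\<lambda>x. A t *v x) ` cball 0 1)) at_top F"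
  shows "filterlim (\<lambda>t. sphere_integral (\<lambda>z. norm (transpose (A t) *v z) powr -p)) (at_right 0) F"
proof -
  let ?M = "\<lambda>t. r_max ((\<lambda>x. A t *v x) ` cball 0 1)"
  let ?S = "\<lambda>t. sphere_integral (\<lambda>z. norm (transpose (A t) *v z) powr -p)"
  let ?\<omega> = "measure lebesgue (cball (0::real^'n) 1)"
  define C where "C = ?\<omega> / D * (2 powr p / (1 - 2 powr (p - CARD('n))))"
  define b where "b m = real CARD('n) * (?\<omega> * m powr (-p/2) + 2 ^ CARD('n) * m powr (-1/4)
    + C * m powr ((p - CARD('n)) / (4*p)))" for m
  have "((\<lambda>t. ?M t powr s) \<longlongrightarrow> 0) F" if "s < 0" for s
    using tendsto_neg_powr[OF that lim] .
  moreover have "-p/2 < 0" "(p - CARD('n)) / (4*p) < 0"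
    using p by (auto simp: divide_neg_pos)
  ultimately have "((\<lambda>t. b (?M t)) \<longlongrightarrow> real CARD('n) * (?\<omega> * 0 + 2 ^ CARD('n) * 0 + C * 0)) F"
    unfolding b_def by (intro tendsto_mult tendsto_add tendsto_const) auto
  then have upper_lim: "((\<lambda>t. b (?M t)) \<longlongrightarrow> 0) F"
    by simp
  have "\<forall>\<^sub>F t in F. 0 < ?M t"
    using filterlim_at_top_dense[THEN iffD1, OF lim, rule_format, of 0] .
  then have upper: "\<forall>\<^sub>F t in F. ?S t \<le> b (?M t)"
    by (rule eventually_mono)
      (use sphere_integral_norm_powr_le_r_max[OF inv p refl] in \<open>simp add: b_def C_def det\<close>)
  have pos: "\<forall>\<^sub>F t in F. 0 < ?S t"
    by (intro always_eventually allI sphere_integral_norm_powr_pos transpose_invertible inv)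
  then have "\<forall>\<^sub>F t in F. 0 \<le> ?S t"
    by (rule eventually_mono) simp
  then have "(?S \<longlongrightarrow> 0) F"
    by (rule tendsto_sandwich[OF _ upper tendsto_const upper_lim])
  then show ?thesis
    using pos by (rule tendsto_imp_filterlim_at_right)
qed

lemma filterlim_sphere_integral_ln_norm_at_top:
  fixes B :: "'i \<Rightarrow> real^'n^'n"
  assumes inv: "\<And>t. invertible (B t)"
    and lim: "filterlim (\<lambda>t. sphere_integral (\<lambda>z. norm (B t *v z) powr -1)) (at_right 0) F"
  shows "filterlim (\<lambda>t. sphere_integral (\<lambda>z. ln (norm (B t *v z)))) at_top F"
proof -
  let ?\<sigma> = "sphere_integral (\<lambda>z::real^'n. 1)"
  let ?S = "\<lambda>t. sphere_integral (\<lambda>z. norm (B t *v z) powr -1)"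
  have "0 < ?\<sigma>"
    unfolding sphere_integral_def lmeasure_integral[OF lmeasurable_cball, symmetric]
    using measure_cball_pos by simp
  then have lim_lower: "filterlim (\<lambda>t. ?\<sigma> * ln (?\<sigma> * inverse (?S t))) at_top F"
    by (intro filterlim_tendsto_pos_mult_at_top[OF tendsto_const] filterlim_compose[OF ln_at_top]
        filterlim_compose[OF filterlim_inverse_at_top_right lim])
  have lower: "?\<sigma> * ln (?\<sigma> * inverse (?S t)) \<le> sphere_integral (\<lambda>z. ln (norm (B t *v z)))" for t
    using sphere_integral_ln_norm_ge[OF inv, of "?\<sigma> / ?S t" t] sphere_integral_norm_powr_pos[OF inv, of t "-1"]
      \<open>0 < ?\<sigma>\<close>
    by (simp add: field_simps)
  show ?thesis
    by (rule filterlim_at_top_mono[OF lim_lower always_eventually]) (use lower in blast)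
qed

theorem lemma4p6:
  fixes E :: "'i \<Rightarrow> (real^'n) set" and F :: "'i filter" and \<alpha> V :: real
  assumes "CARD('n) \<ge> 2"
    and "1 / (real CARD('n) - 1) < \<alpha>" and "\<alpha> \<le> 1"
    and "\<And>t. origin_ellipsoid (E t)"
    and "\<And>t. measure lebesgue (E t) = V"
    and "filterlim (\<lambda>t. r_max (E t)) at_top F"
  shows "filterlim (\<lambda>t. integral_quantity \<alpha> (E t)) at_top F"
proof -
  obtain A :: "'i \<Rightarrow> real^'n^'n" where inv: "\<And>t. invertible (A t)"
    and E: "\<And>t. E t = (\<lambda>x. A t *v x) ` cball 0 1"
    using assms(4) unfolding origin_ellipsoid_def by metis
  have det: "\<bar>det (A t)\<bar> = V / measure lebesgue (cball (0::real^'n) 1)" for t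
    using assms(5)[of t] measure_cball_pos[where 'a="real^'n"]
    by (simp add: E measure_matrix_image_cball field_simps)
  have "filterlim (\<lambda>t. r_max ((\<lambda>x. A t *v x) ` cball 0 1)) at_top F"
    using assms(6) by (simp add: E)
  note S_to_0 = filterlim_sphere_integral_norm_powr_at_right_0[OF inv det _ _ this]
  have "0 < real CARD('n) - 1"
    using assms(1) by simp
  then have "0 < \<alpha>"
    using assms(2) by (meson divide_pos_pos less_trans zero_less_one)
  have "1 / \<alpha> < CARD('n) - 1"
    using assms(2) \<open>0 < real CARD('n) - 1\<close> \<open>0 < \<alpha>\<close> by (simp add: divide_less_eq mult.commute)
  show ?thesis
  proof (cases "\<alpha> < 1")
    case True
    with \<open>0 < \<alpha>\<close> \<open>1 / \<alpha> < CARD('n) - 1\<close>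
    have "filterlim (\<lambda>t. sphere_integral (\<lambda>z. norm (transpose (A t) *v z) powr -(1 / \<alpha> - 1)))
        (at_right 0) F"
      by (intro S_to_0) (auto simp: field_simps)
    with True show ?thesis
      using filterlim_compose[OF filterlim_inverse_at_top_right]
      by (simp add: integral_quantity_def E support_fun_matrix_image_cball)
  next
    case False
    with assms(1,3) show ?thesis
      using filterlim_sphere_integral_ln_norm_at_top[OF transpose_invertible[OF inv] S_to_0[of 1]]
      by (simp add: integral_quantity_def E support_fun_matrix_image_cball)
  qed
qed

end
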